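(* Let $d, K \ge 1$ be integers, $\lambda>0$, $\epsilon>0$, and let $a^*\in[K]=\{1,\dots,K\}$ be a target arm. For each arm $a\in[K]$ let $X_a\in\mathbb{R}^{m_a\times d}$ (historical contexts), $y_a\in\mathbb{R}^{m_a}$ (historical rewards), $V_a=X_a^\top X_a+\lambda I$, and let $\alpha_a\in\mathbb{R}$ be a fixed number (not depending on the rewards or their modification). For $x\in\mathbb{R}^d$ write $\|x\|_{V_a^{-1}}=\sqrt{x^\top V_a^{-1}x}$. Say that $x$ can be $\epsilon$-strongly attacked into pulling $a^*$ if there exist vectors $\Delta_a\in\mathbb{R}^{m_a}$, $a\in[K]$, such that, with $\hat\theta_a=V_a^{-1}X_a^\top(y_a+\Delta_a)$, $$x^\top\hat\theta_{a^*}+\alpha_{a^*}\|x\|_{V_{a^*}^{-1}}\ \ge\ \epsilon+x^\top\hat\theta_a+\alpha_a\|x\|_{V_a^{-1}}\quad\text{for all } a\neq a^*.$$ Then a context $x\in\mathbb{R}^d$ cannot be $\epsilon$-strongly attacked into pulling $a^*$ if and only if there exists $a\neq a^*$ such that both (i) $x\in\operatorname{Null}(X_{a^*})\cap\operatorname{Null}(X_a)$ and (ii) $\alpha_{a^*}\|x\|_{V_{a^*}^{-1}}<\epsilon+\alpha_a\|x\|_{V_a^{-1}}$ hold.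
   Context: This is the setting of a linear contextual bandit with UCB-type arm selection: after ridge regression on (possibly modified) historical rewards, the algorithm picks for context $x$ the arm maximizing $x^\top\hat\theta_a+\alpha_a\|x\|_{V_a^{-1}}$. An attacker may replace each reward vector $y_a$ by $y_a+\Delta_a$ with arbitrary real $\Delta_a$; the contexts $X_a$ and the exploration parameters $\alpha_a$ are unaffected. $\operatorname{Null}(M)$ denotes the null space $\{x: Mx=0\}$. *)

theory Defs
  imports "HOL-Analysis.Analysis"
begin

text \<open>Arm a has m a historical rows; the i-th row (i < m a) of the context matrix X_a is
  the vector X a i in R^d, the reward is y a i.  Thus X_a^T X_a = sum of outer products
  of the rows, and X_a^T v = sum of v i times row i.\<close>

definition gram :: "(nat \<Rightarrow> real^'d) \<Rightarrow> nat \<Rightarrow> real \<Rightarrow> real^'d^'d" where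
  "gram Xa ma lam = (\<Sum>i<ma. (\<chi> j k. Xa i $ j * Xa i $ k)) + lam *\<^sub>R mat 1"

definition theta_hat :: "(nat \<Rightarrow> real^'d) \<Rightarrow> nat \<Rightarrow> real \<Rightarrow> (nat \<Rightarrow> real) \<Rightarrow> real^'d" where
  "theta_hat Xa ma lam ya = matrix_inv (gram Xa ma lam) *v (\<Sum>i<ma. ya i *\<^sub>R Xa i)"

definition vnorm :: "(nat \<Rightarrow> real^'d) \<Rightarrow> nat \<Rightarrow> real \<Rightarrow> real^'d \<Rightarrow> real" where
  "vnorm Xa ma lam x = sqrt (x \<bullet> (matrix_inv (gram Xa ma lam) *v x))"

definition ucb :: "(nat \<Rightarrow> real^'d) \<Rightarrow> nat \<Rightarrow> real \<Rightarrow> real \<Rightarrow> (nat \<Rightarrow> real) \<Rightarrow> real^'d \<Rightarrow> real" where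
  "ucb Xa ma lam al ya x = x \<bullet> theta_hat Xa ma lam ya + al * vnorm Xa ma lam x"

definition strongly_attackable ::
  "nat \<Rightarrow> (nat \<Rightarrow> nat \<Rightarrow> real^'d) \<Rightarrow> (nat \<Rightarrow> nat) \<Rightarrow> (nat \<Rightarrow> nat \<Rightarrow> real) \<Rightarrow> (nat \<Rightarrow> real)
    \<Rightarrow> real \<Rightarrow> real \<Rightarrow> nat \<Rightarrow> real^'d \<Rightarrow> bool" where
  "strongly_attackable K X m y alpha lam eps astar x \<longleftrightarrow>
     (\<exists>\<Delta> :: nat \<Rightarrow> nat \<Rightarrow> real. \<forall>a\<in>{1..K}. a \<noteq> astar \<longrightarrow>
        ucb (X astar) (m astar) lam (alpha astar) (\<lambda>i. y astar i + \<Delta> astar i) x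
          \<ge> eps + ucb (X a) (m a) lam (alpha a) (\<lambda>i. y a i + \<Delta> a i) x)"

definition in_null :: "(nat \<Rightarrow> real^'d) \<Rightarrow> nat \<Rightarrow> real^'d \<Rightarrow> bool" where
  "in_null Xa ma x \<longleftrightarrow> (\<forall>i<ma. Xa i \<bullet> x = 0)"

end

theory Submission
  imports Defs
begin

text \<open>Since \<open>x \<bullet> \<hat>\<theta>\<^sub>a = (V\<^sub>a\<^sup>-\<^sup>1 x) \<bullet> X\<^sub>a\<^sup>T (y\<^sub>a + \<Delta>\<^sub>a)\<close>, the UCB index of arm \<open>a\<close> is an affine
  function of the perturbed rewards with gradient \<open>X\<^sub>a V\<^sub>a\<^sup>-\<^sup>1 x\<close>, and this gradient vanishes exactly
  when \<open>X\<^sub>a x = 0\<close>.  So the attacker can give arm \<open>a\<close> any index if \<open>x \<notin> Null(X\<^sub>a)\<close>, and none but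
  \<open>\<alpha>\<^sub>a \<parallel>x\<parallel>\<^sub>V\<^sub>a\<^sup>-\<^sup>1\<close> otherwise.  With finitely many arms, an attack then fails only if the
  target arm and some competitor both have frozen indices in the wrong order.\<close>

lemma matrix_inv_mult_left:
  fixes A :: "'a::field^'n^'n"
  assumes "invertible A"
  shows "matrix_inv A ** A = mat 1"
proof -
  have "A ** matrix_inv A = mat 1 \<and> matrix_inv A ** A = mat 1"
    using assms unfolding invertible_def matrix_inv_def by (rule someI_ex)
  then show ?thesis by simp
qed

lemma vector_matrix_mult_gram:
  "u v* gram Xa ma lam = (\<Sum>i<ma. (Xa i \<bullet> u) *\<^sub>R Xa i) + lam *\<^sub>R u"
proof -
  have "(u v* gram Xa ma lam) $ k = (\<Sum>i<ma. (Xa i \<bullet> u) * Xa i $ k) + lam * u $ k" for k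
  proof -
    have "(u v* gram Xa ma lam) $ k
        = (\<Sum>j\<in>UNIV. ((\<Sum>i<ma. Xa i $ j * Xa i $ k) + lam * (if j = k then 1 else 0)) * u $ j)"
      by (simp add: vector_matrix_mult_def gram_def mat_def mult.commute)
    also have "\<dots> = (\<Sum>j\<in>UNIV. (\<Sum>i<ma. Xa i $ j * Xa i $ k * u $ j)) + lam * u $ k"
      by (simp add: distrib_right sum.distrib sum_distrib_right if_distrib[of "\<lambda>t. lam * t * _"]
          cong: if_cong)
    also have "\<dots> = (\<Sum>i<ma. (Xa i \<bullet> u) * Xa i $ k) + lam * u $ k"
      by (subst sum.swap) (simp add: inner_vec_def sum_distrib_left sum_distrib_right mult_ac)
    finally show ?thesis .
  qed
  then show ?thesis by (simp add: vec_eq_iff)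
qed

lemma gram_invertible:
  assumes "lam > 0"
  shows "invertible (gram Xa ma lam)"
proof -
  have "z = 0" if "transpose (gram Xa ma lam) *v z = 0" for z
  proof -
    have "0 = z \<bullet> (z v* gram Xa ma lam)"
      using that by simp
    also have "\<dots> = (\<Sum>i<ma. (Xa i \<bullet> z)\<^sup>2) + lam * (z \<bullet> z)"
      by (simp add: vector_matrix_mult_gram inner_add_right inner_sum_right power2_eq_square
          inner_commute)
    finally have "lam * (z \<bullet> z) = 0"
      using assms by (simp add: add_nonneg_eq_0_iff sum_nonneg)
    then show "z = 0" using assms by simp
  qed
  then have "\<exists>B. B ** transpose (gram Xa ma lam) = mat 1"
    by (simp add: matrix_left_invertible_ker)
  then show ?thesis
    by (simp add: left_invertible_transpose invertible_right_inverse)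
qed

definition gram_solve :: "(nat \<Rightarrow> real^'d) \<Rightarrow> nat \<Rightarrow> real \<Rightarrow> real^'d \<Rightarrow> real^'d" where
  "gram_solve Xa ma lam x = x v* matrix_inv (gram Xa ma lam)"

lemma gram_solve_decomposition:
  assumes "lam > 0"
  shows "x = (\<Sum>i<ma. (Xa i \<bullet> gram_solve Xa ma lam x) *\<^sub>R Xa i) + lam *\<^sub>R gram_solve Xa ma lam x"
proof -
  have "gram_solve Xa ma lam x v* gram Xa ma lam = x"
    unfolding gram_solve_def
    by (simp add: vector_matrix_mul_assoc matrix_inv_mult_left gram_invertible[OF assms(1)])
  then show ?thesis by (simp add: vector_matrix_mult_gram)
qed

lemma ucb_eq_affine:
  "ucb Xa ma lam al v x = (\<Sum>i<ma. v i * (Xa i \<bullet> gram_solve Xa ma lam x)) + al * vnorm Xa ma lam x"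
proof -
  have "x \<bullet> theta_hat Xa ma lam v = gram_solve Xa ma lam x \<bullet> (\<Sum>i<ma. v i *\<^sub>R Xa i)"
    unfolding theta_hat_def gram_solve_def by (simp add: dot_lmul_matrix)
  then show ?thesis
    unfolding ucb_def by (simp add: inner_sum_right inner_commute)
qed

lemma in_null_iff_gram_solve:
  assumes "lam > 0"
  shows "in_null Xa ma x \<longleftrightarrow> (\<forall>i<ma. Xa i \<bullet> gram_solve Xa ma lam x = 0)"
proof -
  define u where "u = gram_solve Xa ma lam x"
  define w where "w = (\<Sum>i<ma. (Xa i \<bullet> u) *\<^sub>R Xa i)"
  have x: "x = w + lam *\<^sub>R u"
    unfolding u_def w_def using gram_solve_decomposition[OF assms] .
  show ?thesis
  proof
    assume "in_null Xa ma x"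
    then have "0 = w \<bullet> x"
      unfolding in_null_def w_def by (simp add: inner_sum_left)
    also have "\<dots> = w \<bullet> w + lam * (w \<bullet> u)"
      by (simp add: x inner_add_right)
    also have "w \<bullet> u = (\<Sum>i<ma. (Xa i \<bullet> u)\<^sup>2)"
      by (simp add: w_def inner_sum_left power2_eq_square)
    finally have "(\<Sum>i<ma. (Xa i \<bullet> u)\<^sup>2) = 0"
      using assms by (simp add: add_nonneg_eq_0_iff sum_nonneg)
    then show "\<forall>i<ma. Xa i \<bullet> gram_solve Xa ma lam x = 0"
      by (simp add: u_def sum_nonneg_eq_0_iff)
  next
    assume "\<forall>i<ma. Xa i \<bullet> gram_solve Xa ma lam x = 0"
    then have "\<forall>i<ma. Xa i \<bullet> u = 0" by (simp add: u_def)
    moreover from this have "x = lam *\<^sub>R u"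
      by (simp add: x w_def)
    ultimately show "in_null Xa ma x"
      unfolding in_null_def by simp
  qed
qed

lemma ucb_in_null:
  assumes "lam > 0" and "in_null Xa ma x"
  shows "ucb Xa ma lam al v x = al * vnorm Xa ma lam x"
  using assms by (simp add: ucb_eq_affine in_null_iff_gram_solve)

lemma surj_ucb_perturbed:
  assumes "lam > 0" and "\<not> in_null Xa ma x"
  shows "surj (\<lambda>\<Delta>. ucb Xa ma lam al (\<lambda>i. ya i + \<Delta> i) x)"
proof -
  define c where "c i = Xa i \<bullet> gram_solve Xa ma lam x" for i
  define S where "S = (\<Sum>i<ma. (c i)\<^sup>2)"
  define N where "N = al * vnorm Xa ma lam x"
  have "\<exists>i<ma. c i \<noteq> 0"
    using assms by (simp add: c_def in_null_iff_gram_solve)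
  then have "S \<noteq> 0"
    unfolding S_def by (auto simp: sum_nonneg_eq_0_iff)
  define \<Delta> where "\<Delta> t i = (t - N) / S * c i - ya i" for t i
  show ?thesis
  proof (rule surjI)
    show "ucb Xa ma lam al (\<lambda>i. ya i + \<Delta> t i) x = t" for t
    proof -
      have "(\<Sum>i<ma. (t - N) / S * c i * c i) = (t - N) / S * S"
        by (simp add: S_def sum_distrib_left power2_eq_square mult.assoc)
      then show ?thesis
        using \<open>S \<noteq> 0\<close> by (simp add: \<Delta>_def ucb_eq_affine flip: c_def N_def)
    qed
  qed
qed

lemma exists_dominating_choice_iff:
  fixes f :: "'i \<Rightarrow> 'p \<Rightarrow> real"
  assumes "finite A"
    and frozen: "\<And>a p. a \<in> C \<Longrightarrow> f a p = c a"
    and free: "\<And>a. a \<notin> C \<Longrightarrow> surj (f a)"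
  shows "(\<exists>p. \<forall>a\<in>A. a \<noteq> s \<longrightarrow> f s (p s) \<ge> eps + f a (p a)) \<longleftrightarrow>
    \<not> (\<exists>a\<in>A. a \<noteq> s \<and> s \<in> C \<and> a \<in> C \<and> c s < eps + c a)"
proof
  assume "\<exists>p. \<forall>a\<in>A. a \<noteq> s \<longrightarrow> f s (p s) \<ge> eps + f a (p a)"
  then show "\<not> (\<exists>a\<in>A. a \<noteq> s \<and> s \<in> C \<and> a \<in> C \<and> c s < eps + c a)"
    using frozen by force
next
  assume no_bad_pair: "\<not> (\<exists>a\<in>A. a \<noteq> s \<and> s \<in> C \<and> a \<in> C \<and> c s < eps + c a)"
  have hit: "f a (inv (f a) t) = t" if "a \<notin> C" for a t
    using free[OF that] by (rule surj_f_inv_f)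
  show "\<exists>p. \<forall>a\<in>A. a \<noteq> s \<longrightarrow> f s (p s) \<ge> eps + f a (p a)"
  proof (cases "s \<in> C")
    case True
    define p where "p a = inv (f a) (c s - eps)" for a
    have "f s (p s) \<ge> eps + f a (p a)" if "a \<in> A" "a \<noteq> s" for a
      using that True no_bad_pair frozen hit by (cases "a \<in> C") (auto simp: p_def)
    then show ?thesis by blast
  next
    case False
    define p where "p a = (if a = s then inv (f s) (eps + (\<Sum>b\<in>A. \<bar>f b undefined\<bar>)) else undefined)"
      for a
    have "f s (p s) \<ge> eps + f a (p a)" if "a \<in> A" "a \<noteq> s" for a
    proof -
      have "f a undefined \<le> (\<Sum>b\<in>A. \<bar>f b undefined\<bar>)"
        using \<open>finite A\<close> \<open>a \<in> A\<close> by (meson abs_ge_self member_le_sum abs_ge_zero order_trans)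
      then show ?thesis
        using that False hit by (simp add: p_def)
    qed
    then show ?thesis by blast
  qed
qed

theorem theorem1:
  fixes K :: nat and X :: "nat \<Rightarrow> nat \<Rightarrow> real^'d" and m :: "nat \<Rightarrow> nat"
    and y :: "nat \<Rightarrow> nat \<Rightarrow> real" and alpha :: "nat \<Rightarrow> real"
    and lam eps :: real and astar :: nat and x :: "real^'d"
  assumes "K \<ge> 1" and "lam > 0" and "eps > 0" and "astar \<in> {1..K}"
  shows "\<not> strongly_attackable K X m y alpha lam eps astar x \<longleftrightarrow>
    (\<exists>a\<in>{1..K}. a \<noteq> astar \<and> in_null (X astar) (m astar) x \<and> in_null (X a) (m a) x \<and>
       alpha astar * vnorm (X astar) (m astar) lam x < eps + alpha a * vnorm (X a) (m a) lam x)"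
proof -
  let ?f = "\<lambda>a \<Delta>. ucb (X a) (m a) lam (alpha a) (\<lambda>i. y a i + \<Delta> i) x"
  let ?C = "{a. in_null (X a) (m a) x}"
  let ?c = "\<lambda>a. alpha a * vnorm (X a) (m a) lam x"
  have "strongly_attackable K X m y alpha lam eps astar x \<longleftrightarrow>
      (\<exists>\<Delta>. \<forall>a\<in>{1..K}. a \<noteq> astar \<longrightarrow> ?f astar (\<Delta> astar) \<ge> eps + ?f a (\<Delta> a))"
    unfolding strongly_attackable_def ..
  also have "\<dots> \<longleftrightarrow> \<not> (\<exists>a\<in>{1..K}. a \<noteq> astar \<and> astar \<in> ?C \<and> a \<in> ?C \<and> ?c astar < eps + ?c a)"
  proof (rule exists_dominating_choice_iff)
    show "finite {1..K}" by simp
    show "?f a \<Delta> = ?c a" if "a \<in> ?C" for a \<Delta>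
      using that \<open>lam > 0\<close> by (simp add: ucb_in_null)
    show "surj (?f a)" if "a \<notin> ?C" for a
      using that \<open>lam > 0\<close> by (simp add: surj_ucb_perturbed)
  qed
  finally show ?thesis by blast
qed

end
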